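(* Let $a>0$, $\beta>0$, and let $\lambda$ be feasible. Then for every $0<\delta\le\delta_0$, \[ |g|^2\ge\begin{cases} 9\mathrm{e}^{-4ka}\dfrac{\delta^2}{(2\delta^2+\lambda\delta^{\beta+1})^2} & \text{for } 0\le k\le k_0(\delta),\\[0.4cm] \mathrm{e}^{-ka}\dfrac{\delta^2}{(2\delta^2+\lambda\delta^{\beta+1})^{1/2}} & \text{for } k\ge k_0(\delta). \end{cases} \]
   Context: For $0<\delta<1$ and constants $\beta>0$, $\lambda\in\mathbb{R}$, put $\mu=\delta+\lambda\delta^{\beta}$. The constant $\lambda$ is called feasible if $\lambda>0$ when $0<\beta<1$, $\lambda\ge -1$ when $\beta=1$, and $\lambda\neq 0$ when $\beta>1$. For feasible $\lambda$, $\delta_\mu=\delta_\mu(\beta,\lambda)\in(0,1)$ denotes a number such that $\mu\ge 0$ for all $0<\delta\le\delta_\mu$. For $k\in\mathbb{R}$ define \[ g=g(k,\delta)=\mathrm{i}\delta\left[1-\frac{(\delta+2\mathrm{i})(2\mathrm{i}-\lambda\delta^{\beta})}{\delta(2\delta+\lambda\delta^{\beta})}\mathrm{e}^{-2|k|a}\right], \qquad k_0(\delta)=\frac{1}{2a}\ln\!\left(\frac{1}{2\delta^2+\lambda\delta^{\beta+1}}\right), \] and let $0<\delta_0\le\delta_\mu$ be such that $k_0(\delta)>0$ for all $0<\delta\le\delta_0$. *)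

theory Defs
  imports Complex_Main
begin

definition feasible :: "real \<Rightarrow> real \<Rightarrow> bool" where
  "feasible \<beta> lam \<longleftrightarrow>
     (\<beta> < 1 \<longrightarrow> lam > 0) \<and> (\<beta> = 1 \<longrightarrow> lam \<ge> -1) \<and> (\<beta> > 1 \<longrightarrow> lam \<noteq> 0)"

definition mu :: "real \<Rightarrow> real \<Rightarrow> real \<Rightarrow> real" where
  "mu \<beta> lam \<delta> = \<delta> + lam * \<delta> powr \<beta>"

definition gfun :: "real \<Rightarrow> real \<Rightarrow> real \<Rightarrow> real \<Rightarrow> real \<Rightarrow> complex" where
  "gfun a \<beta> lam k \<delta> =
     \<i> * complex_of_real \<delta> *
     (1 - ((complex_of_real \<delta> + 2 * \<i>) * (2 * \<i> - complex_of_real (lam * \<delta> powr \<beta>)))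
          / complex_of_real (\<delta> * (2 * \<delta> + lam * \<delta> powr \<beta>))
          * complex_of_real (exp (- 2 * \<bar>k\<bar> * a)))"

definition k0 :: "real \<Rightarrow> real \<Rightarrow> real \<Rightarrow> real \<Rightarrow> real" where
  "k0 a \<beta> lam \<delta> = (1 / (2 * a)) * ln (1 / (2 * \<delta>^2 + lam * \<delta> powr (\<beta> + 1)))"

end

theory Submission
  imports Defs
begin

text \<open>
  Write D = 2\<delta> + \<lambda>\<delta>^\<beta>, so that 2\<delta>^2 + \<lambda>\<delta>^(\<beta>+1) = \<delta>D, and E = exp(-2|k|a).
  Expanding (\<delta> + 2i)(2i - \<lambda>\<delta>^\<beta>) gives Im g = \<delta> + (\<delta>\<lambda>\<delta>^\<beta> + 4)E/D, and |g|^2 \<ge> (Im g)^2.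
  The condition \<mu> \<ge> 0 together with \<delta> < 1 makes D > 0 and \<delta>\<lambda>\<delta>^\<beta> + 1 > 0, hence
  Im g \<ge> 3E/D and Im g \<ge> \<delta>. The first bound gives the estimate for small k; the second
  gives the estimate for large k, because k \<ge> k0(\<delta>) says exactly exp(-ka) \<le> sqrt(\<delta>D).
  Feasibility of \<lambda> and \<beta> > 0 enter only through the hypothesis \<mu> \<ge> 0.
\<close>

lemma Im_gfun_form:
  fixes d L E :: real
  assumes "d \<noteq> 0" and "2 * d + L \<noteq> 0"
  shows "Im (\<i> * d * (1 - ((d + 2 * \<i>) * (2 * \<i> - L)) / complex_of_real (d * (2 * d + L)) * E))
         = d + (d * L + 4) * E / (2 * d + L)"
proof -
  have "Re ((d + 2 * \<i>) * (2 * \<i> - L)) = - (d * L + 4)" by simp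
  moreover have "d * (2 * d + L) \<noteq> 0" using assms by simp
  ultimately show ?thesis using assms by (simp add: field_simps)
qed

lemma Im_gfun:
  fixes a \<beta> lam k \<delta> :: real
  assumes "\<delta> \<noteq> 0" and "2 * \<delta> + lam * \<delta> powr \<beta> \<noteq> 0"
  shows "Im (gfun a \<beta> lam k \<delta>) =
    \<delta> + (\<delta> * (lam * \<delta> powr \<beta>) + 4) * exp (- 2 * \<bar>k\<bar> * a) / (2 * \<delta> + lam * \<delta> powr \<beta>)"
  unfolding gfun_def using Im_gfun_form[OF assms] by simp

lemma Im_form_lower_bounds:
  fixes d L E :: real
  assumes "0 < d" and "0 < 2 * d + L" and "0 < d * L + 1" and "0 \<le> E"
  shows "3 * E / (2 * d + L) \<le> d + (d * L + 4) * E / (2 * d + L)"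
    and "d \<le> d + (d * L + 4) * E / (2 * d + L)"
proof -
  have "3 * E \<le> (d * L + 4) * E" using assms(3,4) by (simp add: mult_right_mono)
  then have "3 * E / (2 * d + L) \<le> (d * L + 4) * E / (2 * d + L)"
    using assms(2) by (simp add: divide_right_mono)
  then show "3 * E / (2 * d + L) \<le> d + (d * L + 4) * E / (2 * d + L)"
    using assms(1) by linarith
  show "d \<le> d + (d * L + 4) * E / (2 * d + L)"
    using assms by simp
qed

lemma sq_le_cmod_sq_of_le_Im:
  assumes "0 \<le> c" and "c \<le> Im z"
  shows "c\<^sup>2 \<le> (cmod z)\<^sup>2"
proof -
  have "c \<le> cmod z" using assms(2) abs_Im_le_cmod[of z] by linarith
  then show ?thesis using assms(1) by (simp add: power_mono)
qed

lemma mu_nonneg_imp_pos: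
  fixes \<beta> lam \<delta> :: real
  assumes "0 < \<delta>" and "\<delta> < 1" and "0 \<le> mu \<beta> lam \<delta>"
  shows "0 < 2 * \<delta> + lam * \<delta> powr \<beta>"
    and "0 < \<delta> * (lam * \<delta> powr \<beta>) + 1"
proof -
  have mu: "0 \<le> \<delta> + lam * \<delta> powr \<beta>" using assms(3) by (simp add: mu_def)
  then show "0 < 2 * \<delta> + lam * \<delta> powr \<beta>" using assms(1) by linarith
  have "- (\<delta> * \<delta>) \<le> \<delta> * (lam * \<delta> powr \<beta>)"
    using mult_left_mono[OF mu, of \<delta>] assms(1) by (simp add: algebra_simps)
  moreover have "\<delta> * \<delta> < 1" using assms(1,2) mult_strict_mono[of \<delta> 1 \<delta> 1] by simp
  ultimately show "0 < \<delta> * (lam * \<delta> powr \<beta>) + 1" by linarith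
qed

lemma exp_le_sqrt_of_ln_le:
  fixes a k P :: real
  assumes "0 < a" and "0 < P" and "1 / (2 * a) * ln (1 / P) \<le> k"
  shows "exp (- k * a) \<le> sqrt P"
proof -
  have "- ln P \<le> 2 * a * k" using assms by (simp add: field_simps ln_div)
  then have "exp (- k * a) \<le> exp (ln P / 2)" by (simp add: algebra_simps)
  also have "exp (ln P / 2) = sqrt P"
    using assms(2) by (simp add: powr_half_sqrt[symmetric] powr_def)
  finally show ?thesis .
qed

theorem lemma5p1:
  fixes a \<beta> lam \<delta>\<mu> \<delta>0 :: real
  assumes "a > 0" and "\<beta> > 0" and "feasible \<beta> lam"
    and "0 < \<delta>\<mu>" and "\<delta>\<mu> < 1"
    and "\<forall>\<delta>. 0 < \<delta> \<and> \<delta> \<le> \<delta>\<mu> \<longrightarrow> mu \<beta> lam \<delta> \<ge> 0"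
    and "0 < \<delta>0" and "\<delta>0 \<le> \<delta>\<mu>"
    and "\<forall>\<delta>. 0 < \<delta> \<and> \<delta> \<le> \<delta>0 \<longrightarrow> k0 a \<beta> lam \<delta> > 0"
  shows "\<forall>\<delta>. 0 < \<delta> \<and> \<delta> \<le> \<delta>0 \<longrightarrow>
     (\<forall>k::real. 0 \<le> k \<and> k \<le> k0 a \<beta> lam \<delta> \<longrightarrow>
        (cmod (gfun a \<beta> lam k \<delta>))^2 \<ge>
          9 * exp (- 4 * k * a) * \<delta>^2 / (2 * \<delta>^2 + lam * \<delta> powr (\<beta> + 1))^2) \<and>
     (\<forall>k::real. k \<ge> k0 a \<beta> lam \<delta> \<longrightarrow>
        (cmod (gfun a \<beta> lam k \<delta>))^2 \<ge>
          exp (- k * a) * \<delta>^2 / sqrt (2 * \<delta>^2 + lam * \<delta> powr (\<beta> + 1)))"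
proof (intro allI impI conjI)
  fix \<delta> k :: real
  assume \<delta>: "0 < \<delta> \<and> \<delta> \<le> \<delta>0"
  define D where "D = 2 * \<delta> + lam * \<delta> powr \<beta>"
  define E where "E = exp (- 2 * \<bar>k\<bar> * a)"
  have "0 \<le> mu \<beta> lam \<delta>" and "\<delta> < 1" using assms(5,6,8) \<delta> by auto
  then have D: "0 < D" and L: "0 < \<delta> * (lam * \<delta> powr \<beta>) + 1"
    using \<delta> mu_nonneg_imp_pos unfolding D_def by auto
  have P: "2 * \<delta>^2 + lam * \<delta> powr (\<beta> + 1) = \<delta> * D"
    using \<delta> by (simp add: D_def powr_add power2_eq_square algebra_simps)
  have Im: "Im (gfun a \<beta> lam k \<delta>) = \<delta> + (\<delta> * (lam * \<delta> powr \<beta>) + 4) * E / D"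
    using Im_gfun[of \<delta> lam \<beta>] \<delta> D unfolding D_def E_def by simp
  note bounds = Im_form_lower_bounds[of \<delta> "lam * \<delta> powr \<beta>" E, folded D_def, OF _ D L]
  {
    assume "0 \<le> k \<and> k \<le> k0 a \<beta> lam \<delta>"
    then have "exp (- 4 * k * a) = E\<^sup>2"
      by (simp add: E_def power2_eq_square exp_add[symmetric])
    then have "9 * exp (- 4 * k * a) * \<delta>^2 / (\<delta> * D)^2 = (3 * E / D)\<^sup>2"
      using \<delta> by (simp add: power_divide power_mult_distrib)
    also have "\<dots> \<le> (cmod (gfun a \<beta> lam k \<delta>))\<^sup>2"
      using bounds(1) \<delta> D by (intro sq_le_cmod_sq_of_le_Im) (auto simp: Im E_def)
    finally show "(cmod (gfun a \<beta> lam k \<delta>))^2 \<ge>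
        9 * exp (- 4 * k * a) * \<delta>^2 / (2 * \<delta>^2 + lam * \<delta> powr (\<beta> + 1))^2"
      unfolding P .
  next
    assume "k \<ge> k0 a \<beta> lam \<delta>"
    then have "exp (- k * a) \<le> sqrt (\<delta> * D)"
      using assms(1) \<delta> D by (intro exp_le_sqrt_of_ln_le) (auto simp: k0_def P)
    then have "exp (- k * a) * \<delta>^2 / sqrt (\<delta> * D) \<le> \<delta>\<^sup>2"
      using \<delta> D by (simp add: divide_le_eq mult_right_mono)
    also have "\<dots> \<le> (cmod (gfun a \<beta> lam k \<delta>))\<^sup>2"
      using bounds(2) \<delta> by (intro sq_le_cmod_sq_of_le_Im) (auto simp: Im E_def)
    finally show "(cmod (gfun a \<beta> lam k \<delta>))^2 \<ge>
        exp (- k * a) * \<delta>^2 / sqrt (2 * \<delta>^2 + lam * \<delta> powr (\<beta> + 1))"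
      unfolding P .
  }
qed

end
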